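(* For all real numbers $a,b,c>0$, \[ \frac{(ab+ac+bc)^{2}}{\sqrt{a^{2}+b^{2}+c^{2}}\,\sqrt{a^{2}+b^{2}+c^{2}+3ab+3bc+3ca}} \leq \frac{a^{2}b}{\sqrt{b^{2}+3ac}} + \frac{b^{2}c}{\sqrt{c^{2}+3ab}} + \frac{c^{2}a}{\sqrt{a^{2}+3bc}}. \] *)

theory Defs
  imports Complex_Main
begin

end

theory Submission
  imports Defs
begin

text \<open>With \<open>x = sqrt (b\<^sup>2 + 3ac)\<close>, \<open>y = sqrt (c\<^sup>2 + 3ab)\<close>, \<open>z = sqrt (a\<^sup>2 + 3bc)\<close> the right-hand
  side is \<open>(ab)\<^sup>2/(bx) + (bc)\<^sup>2/(cy) + (ca)\<^sup>2/(az)\<close>, which by the Engel form of Cauchy-Schwarz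
  is at least \<open>(ab + bc + ca)\<^sup>2 / (bx + cy + az)\<close>. Since \<open>x\<^sup>2 + y\<^sup>2 + z\<^sup>2 = a\<^sup>2 + b\<^sup>2 + c\<^sup>2 + 3(ab + bc + ca)\<close>,
  Cauchy-Schwarz once more bounds \<open>bx + cy + az\<close> by the denominator on the left.\<close>

lemma Cauchy_Schwarz_ineq3:
  fixes u1 u2 u3 v1 v2 v3 :: real
  shows "u1*v1 + u2*v2 + u3*v3 \<le> sqrt (u1\<^sup>2 + u2\<^sup>2 + u3\<^sup>2) * sqrt (v1\<^sup>2 + v2\<^sup>2 + v3\<^sup>2)"
proof -
  have Lagrange: "(u1\<^sup>2 + u2\<^sup>2 + u3\<^sup>2) * (v1\<^sup>2 + v2\<^sup>2 + v3\<^sup>2) - (u1*v1 + u2*v2 + u3*v3)\<^sup>2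
      = (u1*v2 - u2*v1)\<^sup>2 + (u1*v3 - u3*v1)\<^sup>2 + (u2*v3 - u3*v2)\<^sup>2"
    by (simp add: power2_eq_square algebra_simps)
  have "(u1*v1 + u2*v2 + u3*v3)\<^sup>2 \<le> (u1\<^sup>2 + u2\<^sup>2 + u3\<^sup>2) * (v1\<^sup>2 + v2\<^sup>2 + v3\<^sup>2)"
    using Lagrange by (smt (verit) zero_le_power2)
  then show ?thesis
    by (simp add: real_le_rsqrt flip: real_sqrt_mult)
qed

lemma Engel_ineq3:
  fixes u1 u2 u3 w1 w2 w3 :: "'a::linordered_field"
  assumes "w1 > 0" "w2 > 0" "w3 > 0"
  shows "(u1 + u2 + u3)\<^sup>2 / (w1 + w2 + w3) \<le> u1\<^sup>2/w1 + u2\<^sup>2/w2 + u3\<^sup>2/w3"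
proof -
  define t1 t2 t3 where "t1 = u1/w1" and "t2 = u2/w2" and "t3 = u3/w3"
  have u: "u1 = t1*w1" "u2 = t2*w2" "u3 = t3*w3"
    using assms by (simp_all add: t1_def t2_def t3_def)
  have Lagrange: "(t1\<^sup>2*w1 + t2\<^sup>2*w2 + t3\<^sup>2*w3) * (w1 + w2 + w3) - (t1*w1 + t2*w2 + t3*w3)\<^sup>2
      = w1*w2*(t1 - t2)\<^sup>2 + w1*w3*(t1 - t3)\<^sup>2 + w2*w3*(t2 - t3)\<^sup>2"
    by (simp add: power2_eq_square algebra_simps)
  have "0 \<le> w1*w2*(t1 - t2)\<^sup>2 + w1*w3*(t1 - t3)\<^sup>2 + w2*w3*(t2 - t3)\<^sup>2"
    using assms by (intro add_nonneg_nonneg mult_nonneg_nonneg) auto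
  then have "(t1*w1 + t2*w2 + t3*w3)\<^sup>2 \<le> (t1\<^sup>2*w1 + t2\<^sup>2*w2 + t3\<^sup>2*w3) * (w1 + w2 + w3)"
    using Lagrange by linarith
  then have "(t1*w1 + t2*w2 + t3*w3)\<^sup>2 / (w1 + w2 + w3) \<le> t1\<^sup>2*w1 + t2\<^sup>2*w2 + t3\<^sup>2*w3"
    using assms by (simp add: divide_le_eq)
  then show ?thesis
    using assms by (simp add: u power2_eq_square)
qed

theorem mainTheorem10:
  fixes a b c :: real
  assumes "a > 0" and "b > 0" and "c > 0"
  shows "(a*b + a*c + b*c)^2 / (sqrt (a^2 + b^2 + c^2) * sqrt (a^2 + b^2 + c^2 + 3*a*b + 3*b*c + 3*c*a))
    \<le> a^2*b / sqrt (b^2 + 3*a*c) + b^2*c / sqrt (c^2 + 3*a*b) + c^2*a / sqrt (a^2 + 3*b*c)"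
proof -
  define x y z where "x = sqrt (b\<^sup>2 + 3*a*c)" and "y = sqrt (c\<^sup>2 + 3*a*b)" and "z = sqrt (a\<^sup>2 + 3*b*c)"
  have pos: "x > 0" "y > 0" "z > 0"
    using assms by (simp_all add: x_def y_def z_def add_pos_pos)
  have "b*x + c*y + a*z \<le> sqrt (b\<^sup>2 + c\<^sup>2 + a\<^sup>2) * sqrt (x\<^sup>2 + y\<^sup>2 + z\<^sup>2)"
    by (rule Cauchy_Schwarz_ineq3)
  also have "\<dots> = sqrt (a^2 + b^2 + c^2) * sqrt (a^2 + b^2 + c^2 + 3*a*b + 3*b*c + 3*c*a)"
    using assms by (simp add: x_def y_def z_def algebra_simps)
  finally have denominator:
    "b*x + c*y + a*z \<le> sqrt (a^2 + b^2 + c^2) * sqrt (a^2 + b^2 + c^2 + 3*a*b + 3*b*c + 3*c*a)" .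
  have weights_pos: "b*x + c*y + a*z > 0"
    using assms pos by (simp add: add_pos_pos)
  have "(a*b + a*c + b*c)^2 / (sqrt (a^2 + b^2 + c^2) * sqrt (a^2 + b^2 + c^2 + 3*a*b + 3*b*c + 3*c*a))
      \<le> (a*b + a*c + b*c)\<^sup>2 / (b*x + c*y + a*z)"
    using denominator weights_pos by (intro frac_le) simp_all
  also have "\<dots> = (a*b + b*c + c*a)\<^sup>2 / (b*x + c*y + a*z)"
    by (simp add: algebra_simps)
  also have "\<dots> \<le> (a*b)\<^sup>2/(b*x) + (b*c)\<^sup>2/(c*y) + (c*a)\<^sup>2/(a*z)"
    using assms pos by (intro Engel_ineq3) simp_all
  also have "\<dots> = a^2*b/x + b^2*c/y + c^2*a/z"
    using assms by (simp add: power2_eq_square)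
  finally show ?thesis
    by (simp only: x_def y_def z_def)
qed

end
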